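(* Let $\mathcal{P}=\langle V_{\mathcal{P}},F_{\mathcal{P}}\rangle$ be a declassification policy, with public view $\Delta^{\mathcal{P}}_{P},\Gamma^{\mathcal{P}}_{P}$ (defined in the context). Let $e$ be a term containing no type variables (i.e. $\delta(e)$ is syntactically equal to $e$ for every type substitution $\delta$), and suppose $\Delta^{\mathcal{P}}_{P},\Gamma^{\mathcal{P}}_{P}\vdash e:\tau$. Then $e$ is $\mathrm{TRNI}(\mathcal{P},\tau)$, i.e. $\Gamma^{\mathcal{P}}_{C}\vdash e$ (e is typable in the confidential view), $\Delta^{\mathcal{P}}_{P}\vdash\tau$, and for all term substitutions $\langle\gamma_1,\gamma_2\rangle\in I[\mathcal{P}]$ we have $\langle\gamma_1(e),\gamma_2(e)\rangle\in I[\tau]^{ev}$.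
   Context: Language (simply typed call-by-value lambda calculus with type variables). Types $\tau::=\mathbf{int}\mid\alpha\mid\tau_1\times\tau_2\mid\tau_1\to\tau_2$; values $v::=n\mid\langle v,v\rangle\mid\lambda x:\tau.e$ ($n$ integer literals); terms $e::=x\mid v\mid\langle e,e\rangle\mid\pi_i e\mid e_1e_2$; the language is assumed to include primitive arithmetic operators $e\oplus e$ on $\mathbf{int}$ whose applications to well-typed arguments terminate. Evaluation contexts $E::=[.]\mid\langle E,e\rangle\mid\langle v,E\rangle\mid\pi_iE\mid E\,e\mid v\,E$; reduction: $\pi_i\langle v_1,v_2\rangle\to v_i$, $(\lambda x:\tau.e)v\to e[x\mapsto v]$, and $E[e]\to E[e']$ if $e\to e'$; $\to^*$ is the reflexive transitive closure. Typing judgments $\Delta,\Gamma\vdash e:\tau$ ($\Delta$ a set of type variables, $\Gamma$ a map from term variables to types well-formed in $\Delta$) are the standard ones for int literals, variables, pairs, projections, abstraction and application. $\Gamma\vdash e$ means $\Gamma\vdash e:\tau$ for some $\tau$; $\Delta\vdash\tau$ means all type variables of $\tau$ are in $\Delta$. Policy: $\mathcal{P}=\langle V_{\mathcal{P}},F_{\mathcal{P}}\rangle$ where $V_{\mathcal{P}}$ is a finite set of variables (confidential inputs) and $F_{\mathcal{P}}$ is a partial map from $V_{\mathcal{P}}$ to declassification functions $f=\lambda x:\mathbf{int}.e$, each a closed term of type $\mathbf{int}\to\tau_f$ for a closed type $\tau_f$. Let $V_\top=V_{\mathcal{P}}\setminus\mathrm{dom}(F_{\mathcal{P}})$. Confidential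 view: $\Gamma^{\mathcal{P}}_C=\{x:\mathbf{int}\mid x\in V_\top\}\cup\bigcup_{x\in\mathrm{dom}F_{\mathcal{P}},F_{\mathcal{P}}(x)=f}\{x:\mathbf{int},\,x_f:\mathbf{int}\to\tau_f\}$. Public view: $\Delta^{\mathcal{P}}_P=\{\alpha_x\mid x\in V_\top\}\cup\{\alpha_f\mid F_{\mathcal{P}}(x)=f\}$ and $\Gamma^{\mathcal{P}}_P=\{x:\alpha_x\mid x\in V_\top\}\cup\{x:\alpha_f,\,x_f:\alpha_f\to\tau_f\mid F_{\mathcal{P}}(x)=f\}$. All variables $x_f,\alpha_x,\alpha_f$ are fresh and pairwise distinct as appropriate. Let $\delta_{\mathcal{P}}$ be the type substitution mapping every $\alpha_x$ and $\alpha_f$ in $\Delta^{\mathcal{P}}_P$ to $\mathbf{int}$. Indistinguishability, for $\tau$ with $\Delta^{\mathcal{P}}_P\vdash\tau$, defined inductively: $\langle n,n\rangle\in I[\mathbf{int}]$; $\langle\langle v_1,v_2\rangle,\langle v_1',v_2'\rangle\rangle\in I[\tau_1\times\tau_2]$ if $\langle v_1,v_1'\rangle\in I[\tau_1]$ and $\langle v_2,v_2'\rangle\in I[\tau_2]$; $\langle v_1,v_2\rangle\in I[\tau_1\to\tau_2]$ if for all $\langle v_1',v_2'\rangle\in I[\tau_1]$, $\langle v_1v_1',v_2v_2'\rangle\in I[\tau_2]^{ev}$; $\langle v_1,v_2\rangle\in I[\alpha_x]$ if $\vdash v_1,v_2:\mathbf{int}$; $\langle v_1,v_2\rangle\in I[\alpha_f]$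 if $\vdash v_1,v_2:\mathbf{int}$ and $\langle f\,v_1,f\,v_2\rangle\in I[\tau_f]^{ev}$; $\langle e_1,e_2\rangle\in I[\tau]^{ev}$ if $\vdash e_1,e_2:\delta_{\mathcal{P}}(\tau)$, $e_1\to^*v_1$, $e_2\to^*v_2$ and $\langle v_1,v_2\rangle\in I[\tau]$. A term substitution $\gamma$ (finite map from term variables to closed values) respects $\Gamma$ if $\mathrm{dom}\gamma=\mathrm{dom}\Gamma$ and $\vdash\gamma(x):\Gamma(x)$ for all $x$. $\langle\gamma_1,\gamma_2\rangle\in I[\mathcal{P}]$ iff both $\gamma_i$ respect $\delta_{\mathcal{P}}(\Gamma^{\mathcal{P}}_P)$ (the context $\Gamma^{\mathcal{P}}_P$ with $\delta_{\mathcal{P}}$ applied to each type), $\gamma_1(x_f)=\gamma_2(x_f)=f$ for every $x_f\in\mathrm{dom}\Gamma^{\mathcal{P}}_P$, and $\langle\gamma_1(x),\gamma_2(x)\rangle\in I[\Gamma^{\mathcal{P}}_P(x)]$ for every other $x\in\mathrm{dom}\Gamma^{\mathcal{P}}_P$. *)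

theory Defs
  imports Main
begin

type_synonym vname = string
type_synonym tyvar = string

datatype ty = TInt | TVar tyvar | Prod ty ty | Fun ty ty

datatype "term" =
    Var vname
  | Lit int
  | Pair "term" "term"
  | Proj1 "term"
  | Proj2 "term"
  | Lam vname ty "term"
  | App "term" "term"
  | Op "int \<Rightarrow> int \<Rightarrow> int" "term" "term"

fun is_val :: "term \<Rightarrow> bool" where
  "is_val (Lit n) = True"
| "is_val (Pair v1 v2) = (is_val v1 \<and> is_val v2)"
| "is_val (Lam x t e) = True"
| "is_val _ = False"

fun tyvars :: "ty \<Rightarrow> tyvar set" where
  "tyvars TInt = {}"
| "tyvars (TVar a) = {a}"
| "tyvars (Prod t1 t2) = tyvars t1 \<union> tyvars t2"
| "tyvars (Fun t1 t2) = tyvars t1 \<union> tyvars t2"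

definition wf_ty :: "tyvar set \<Rightarrow> ty \<Rightarrow> bool" where
  "wf_ty \<Delta> t \<longleftrightarrow> tyvars t \<subseteq> \<Delta>"

fun tsubst_ty :: "(tyvar \<Rightarrow> ty) \<Rightarrow> ty \<Rightarrow> ty" where
  "tsubst_ty \<delta> TInt = TInt"
| "tsubst_ty \<delta> (TVar a) = \<delta> a"
| "tsubst_ty \<delta> (Prod t1 t2) = Prod (tsubst_ty \<delta> t1) (tsubst_ty \<delta> t2)"
| "tsubst_ty \<delta> (Fun t1 t2) = Fun (tsubst_ty \<delta> t1) (tsubst_ty \<delta> t2)"

fun tsubst :: "(tyvar \<Rightarrow> ty) \<Rightarrow> term \<Rightarrow> term" where
  "tsubst \<delta> (Var x) = Var x"
| "tsubst \<delta> (Lit n) = Lit n"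
| "tsubst \<delta> (Pair e1 e2) = Pair (tsubst \<delta> e1) (tsubst \<delta> e2)"
| "tsubst \<delta> (Proj1 e) = Proj1 (tsubst \<delta> e)"
| "tsubst \<delta> (Proj2 e) = Proj2 (tsubst \<delta> e)"
| "tsubst \<delta> (Lam x t e) = Lam x (tsubst_ty \<delta> t) (tsubst \<delta> e)"
| "tsubst \<delta> (App e1 e2) = App (tsubst \<delta> e1) (tsubst \<delta> e2)"
| "tsubst \<delta> (Op f e1 e2) = Op f (tsubst \<delta> e1) (tsubst \<delta> e2)"

section \<open>Term substitution (only ever used with closed values)\<close>

fun msubst :: "(vname \<rightharpoonup> term) \<Rightarrow> term \<Rightarrow> term" where
  "msubst \<gamma> (Var x) = (case \<gamma> x of Some v \<Rightarrow> v | None \<Rightarrow> Var x)"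
| "msubst \<gamma> (Lit n) = Lit n"
| "msubst \<gamma> (Pair e1 e2) = Pair (msubst \<gamma> e1) (msubst \<gamma> e2)"
| "msubst \<gamma> (Proj1 e) = Proj1 (msubst \<gamma> e)"
| "msubst \<gamma> (Proj2 e) = Proj2 (msubst \<gamma> e)"
| "msubst \<gamma> (Lam x t e) = Lam x t (msubst (\<gamma>(x := None)) e)"
| "msubst \<gamma> (App e1 e2) = App (msubst \<gamma> e1) (msubst \<gamma> e2)"
| "msubst \<gamma> (Op f e1 e2) = Op f (msubst \<gamma> e1) (msubst \<gamma> e2)"

definition subst :: "vname \<Rightarrow> term \<Rightarrow> term \<Rightarrow> term" where
  "subst x v e = msubst [x \<mapsto> v] e"

section \<open>Call-by-value reduction (evaluation contexts unfolded into congruence rules)\<close>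

inductive step :: "term \<Rightarrow> term \<Rightarrow> bool" where
  proj1: "is_val v1 \<Longrightarrow> is_val v2 \<Longrightarrow> step (Proj1 (Pair v1 v2)) v1"
| proj2: "is_val v1 \<Longrightarrow> is_val v2 \<Longrightarrow> step (Proj2 (Pair v1 v2)) v2"
| beta: "is_val v \<Longrightarrow> step (App (Lam x t e) v) (subst x v e)"
| op: "step (Op f (Lit n1) (Lit n2)) (Lit (f n1 n2))"
| pair1: "step e e' \<Longrightarrow> step (Pair e e2) (Pair e' e2)"
| pair2: "is_val v \<Longrightarrow> step e e' \<Longrightarrow> step (Pair v e) (Pair v e')"
| proj1c: "step e e' \<Longrightarrow> step (Proj1 e) (Proj1 e')"
| proj2c: "step e e' \<Longrightarrow> step (Proj2 e) (Proj2 e')"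
| app1: "step e e' \<Longrightarrow> step (App e e2) (App e' e2)"
| app2: "is_val v \<Longrightarrow> step e e' \<Longrightarrow> step (App v e) (App v e')"
| op1: "step e e' \<Longrightarrow> step (Op f e e2) (Op f e' e2)"
| op2: "is_val v \<Longrightarrow> step e e' \<Longrightarrow> step (Op f v e) (Op f v e')"

abbreviation steps :: "term \<Rightarrow> term \<Rightarrow> bool" where
  "steps \<equiv> step\<^sup>*\<^sup>*"

inductive typing :: "tyvar set \<Rightarrow> (vname \<rightharpoonup> ty) \<Rightarrow> term \<Rightarrow> ty \<Rightarrow> bool" where
  t_lit: "typing \<Delta> \<Gamma> (Lit n) TInt"
| t_var: "\<Gamma> x = Some t \<Longrightarrow> typing \<Delta> \<Gamma> (Var x) t"
| t_pair: "typing \<Delta> \<Gamma> e1 t1 \<Longrightarrow> typing \<Delta> \<Gamma> e2 t2 \<Longrightarrow> typing \<Delta> \<Gamma> (Pair e1 e2) (Prod t1 t2)"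
| t_proj1: "typing \<Delta> \<Gamma> e (Prod t1 t2) \<Longrightarrow> typing \<Delta> \<Gamma> (Proj1 e) t1"
| t_proj2: "typing \<Delta> \<Gamma> e (Prod t1 t2) \<Longrightarrow> typing \<Delta> \<Gamma> (Proj2 e) t2"
| t_lam: "wf_ty \<Delta> t1 \<Longrightarrow> typing \<Delta> (\<Gamma>(x \<mapsto> t1)) e t2 \<Longrightarrow> typing \<Delta> \<Gamma> (Lam x t1 e) (Fun t1 t2)"
| t_app: "typing \<Delta> \<Gamma> e1 (Fun t1 t2) \<Longrightarrow> typing \<Delta> \<Gamma> e2 t1 \<Longrightarrow> typing \<Delta> \<Gamma> (App e1 e2) t2"
| t_op: "typing \<Delta> \<Gamma> e1 TInt \<Longrightarrow> typing \<Delta> \<Gamma> e2 TInt \<Longrightarrow> typing \<Delta> \<Gamma> (Op f e1 e2) TInt"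

definition ev_rel :: "(tyvar \<Rightarrow> ty) \<Rightarrow> ty \<Rightarrow> (term \<Rightarrow> term \<Rightarrow> bool) \<Rightarrow> term \<Rightarrow> term \<Rightarrow> bool" where
  "ev_rel \<delta> t R e1 e2 \<longleftrightarrow>
     typing {} Map.empty e1 (tsubst_ty \<delta> t) \<and> typing {} Map.empty e2 (tsubst_ty \<delta> t) \<and>
     (\<exists>v1 v2. steps e1 v1 \<and> is_val v1 \<and> steps e2 v2 \<and> is_val v2 \<and> R v1 v2)"

text \<open>Generic value relation I[\<tau>], parametrised by the interpretation \<sigma> of
  type variables and the type substitution \<delta> used in the evaluation closure.\<close>
primrec indist :: "(tyvar \<Rightarrow> term \<Rightarrow> term \<Rightarrow> bool) \<Rightarrow> (tyvar \<Rightarrow> ty) \<Rightarrow> ty \<Rightarrow> term \<Rightarrow> term \<Rightarrow> bool" where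
  "indist \<sigma> \<delta> TInt v1 v2 = (\<exists>n. v1 = Lit n \<and> v2 = Lit n)"
| "indist \<sigma> \<delta> (TVar a) v1 v2 = \<sigma> a v1 v2"
| "indist \<sigma> \<delta> (Prod t1 t2) v1 v2 =
     (\<exists>a b a' b'. v1 = Pair a b \<and> v2 = Pair a' b' \<and> indist \<sigma> \<delta> t1 a a' \<and> indist \<sigma> \<delta> t2 b b')"
| "indist \<sigma> \<delta> (Fun t1 t2) v1 v2 =
     (is_val v1 \<and> is_val v2 \<and>
      (\<forall>w1 w2. indist \<sigma> \<delta> t1 w1 w2 \<longrightarrow> ev_rel \<delta> t2 (indist \<sigma> \<delta> t2) (App v1 w1) (App v2 w2)))"

text \<open>Indistinguishability for closed types (no type variables occur).\<close>
definition indist_closed :: "ty \<Rightarrow> term \<Rightarrow> term \<Rightarrow> bool" where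
  "indist_closed t = indist (\<lambda>_ _ _. False) TVar t"

text \<open>A policy is given by V (confidential variables) and a partial map F from V
  to pairs (f, \<tau>_f) of a declassification function and its (closed) result type.\<close>
definition wf_policy :: "vname set \<Rightarrow> (vname \<rightharpoonup> term \<times> ty) \<Rightarrow> bool" where
  "wf_policy V F \<longleftrightarrow> finite V \<and> dom F \<subseteq> V \<and>
     (\<forall>x f tf. F x = Some (f, tf) \<longrightarrow>
        (\<exists>y b. f = Lam y TInt b) \<and> typing {} Map.empty f (Fun TInt tf) \<and> tyvars tf = {})"

text \<open>Fresh names: a x is the type variable \<alpha>_x (x \<in> V_top) resp. \<alpha>_f (F x = f);
  xf x is the term variable x_f.\<close>
definition naming_ok :: "vname set \<Rightarrow> (vname \<rightharpoonup> term \<times> ty) \<Rightarrow> (vname \<Rightarrow> tyvar) \<Rightarrow> (vname \<Rightarrow> vname) \<Rightarrow> bool" where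
  "naming_ok V F a xf \<longleftrightarrow>
     (\<forall>x\<in>V. \<forall>y\<in>V. a x = a y \<longrightarrow> x = y \<or> (x \<in> dom F \<and> y \<in> dom F \<and> F x = F y)) \<and>
     (\<forall>x\<in>dom F. xf x \<notin> V) \<and>
     (\<forall>x\<in>dom F. \<forall>y\<in>dom F. xf x = xf y \<longrightarrow> a x = a y)"

definition Delta_P :: "vname set \<Rightarrow> (vname \<Rightarrow> tyvar) \<Rightarrow> tyvar set" where
  "Delta_P V a = a ` V"

definition Gamma_P :: "vname set \<Rightarrow> (vname \<rightharpoonup> term \<times> ty) \<Rightarrow> (vname \<Rightarrow> tyvar) \<Rightarrow> (vname \<Rightarrow> vname) \<Rightarrow> vname \<rightharpoonup> ty" where
  "Gamma_P V F a xf z =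
     (if z \<in> V then Some (TVar (a z))
      else if \<exists>x\<in>dom F. xf x = z then
        (let x = (SOME x. x \<in> dom F \<and> xf x = z) in Some (Fun (TVar (a x)) (snd (the (F x)))))
      else None)"

definition Gamma_C :: "vname set \<Rightarrow> (vname \<rightharpoonup> term \<times> ty) \<Rightarrow> (vname \<Rightarrow> vname) \<Rightarrow> vname \<rightharpoonup> ty" where
  "Gamma_C V F xf z =
     (if z \<in> V then Some TInt
      else if \<exists>x\<in>dom F. xf x = z then
        (let x = (SOME x. x \<in> dom F \<and> xf x = z) in Some (Fun TInt (snd (the (F x)))))
      else None)"

definition delta_P :: "vname set \<Rightarrow> (vname \<Rightarrow> tyvar) \<Rightarrow> tyvar \<Rightarrow> ty" where
  "delta_P V a \<alpha> = (if \<alpha> \<in> a ` V then TInt else TVar \<alpha>)"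

definition sigma_P :: "vname set \<Rightarrow> (vname \<rightharpoonup> term \<times> ty) \<Rightarrow> (vname \<Rightarrow> tyvar) \<Rightarrow> tyvar \<Rightarrow> term \<Rightarrow> term \<Rightarrow> bool" where
  "sigma_P V F a \<alpha> v1 v2 \<longleftrightarrow>
     is_val v1 \<and> is_val v2 \<and> typing {} Map.empty v1 TInt \<and> typing {} Map.empty v2 TInt \<and>
     (\<forall>x\<in>dom F. a x = \<alpha> \<longrightarrow>
        (case the (F x) of (f, tf) \<Rightarrow> ev_rel TVar tf (indist_closed tf) (App f v1) (App f v2)))"

definition I_P :: "vname set \<Rightarrow> (vname \<rightharpoonup> term \<times> ty) \<Rightarrow> (vname \<Rightarrow> tyvar) \<Rightarrow> ty \<Rightarrow> term \<Rightarrow> term \<Rightarrow> bool" where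
  "I_P V F a = indist (sigma_P V F a) (delta_P V a)"

definition I_P_ev :: "vname set \<Rightarrow> (vname \<rightharpoonup> term \<times> ty) \<Rightarrow> (vname \<Rightarrow> tyvar) \<Rightarrow> ty \<Rightarrow> term \<Rightarrow> term \<Rightarrow> bool" where
  "I_P_ev V F a t = ev_rel (delta_P V a) t (I_P V F a t)"

definition respects_ctx :: "(vname \<rightharpoonup> term) \<Rightarrow> (vname \<rightharpoonup> ty) \<Rightarrow> bool" where
  "respects_ctx \<gamma> \<Gamma> \<longleftrightarrow> dom \<gamma> = dom \<Gamma> \<and>
     (\<forall>x t. \<Gamma> x = Some t \<longrightarrow> (\<exists>v. \<gamma> x = Some v \<and> is_val v \<and> typing {} Map.empty v t))"

definition I_subst :: "vname set \<Rightarrow> (vname \<rightharpoonup> term \<times> ty) \<Rightarrow> (vname \<Rightarrow> tyvar) \<Rightarrow> (vname \<Rightarrow> vname)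
    \<Rightarrow> (vname \<rightharpoonup> term) \<Rightarrow> (vname \<rightharpoonup> term) \<Rightarrow> bool" where
  "I_subst V F a xf \<gamma>1 \<gamma>2 \<longleftrightarrow>
     respects_ctx \<gamma>1 (map_option (tsubst_ty (delta_P V a)) \<circ> Gamma_P V F a xf) \<and>
     respects_ctx \<gamma>2 (map_option (tsubst_ty (delta_P V a)) \<circ> Gamma_P V F a xf) \<and>
     (\<forall>x\<in>dom F. \<gamma>1 (xf x) = Some (fst (the (F x))) \<and> \<gamma>2 (xf x) = Some (fst (the (F x)))) \<and>
     (\<forall>x\<in>V. I_P V F a (TVar (a x)) (the (\<gamma>1 x)) (the (\<gamma>2 x)))"

definition TRNI :: "vname set \<Rightarrow> (vname \<rightharpoonup> term \<times> ty) \<Rightarrow> (vname \<Rightarrow> tyvar) \<Rightarrow> (vname \<Rightarrow> vname)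
    \<Rightarrow> term \<Rightarrow> ty \<Rightarrow> bool" where
  "TRNI V F a xf e t \<longleftrightarrow>
     (\<exists>t'. typing {} (Gamma_C V F xf) e t') \<and>
     wf_ty (Delta_P V a) t \<and>
     (\<forall>\<gamma>1 \<gamma>2. I_subst V F a xf \<gamma>1 \<gamma>2 \<longrightarrow> I_P_ev V F a t (msubst \<gamma>1 e) (msubst \<gamma>2 e))"

end

theory Submission
  imports Defs
begin

text \<open>
  The theorem is the fundamental lemma of a binary logical relation. Interpret each type variable
  \<alpha>_x by the relation of all pairs of integer literals, and \<alpha>_f by the kernel of f: the pairs
  of literals whose images under f are indistinguishable at the closed type \<tau>_f. A term that is
  well typed under such an interpretation maps related substitutions to related evaluations;
  this is proved by induction on the typing derivation. Two conditions make the induction go through. First, every interpretation must be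
  inhabited (0 is related to itself, since f 0 terminates), so that the type of a function value
  can be recovered from the types of its applications. Second, the annotations of e must contain no
  type variables, so that substituting related values into an abstraction yields a closed value
  of the instantiated type. Instantiating every type variable of the public view by int turns it
  into the confidential view, which gives the typability of e there.
\<close>

fun fv :: "term \<Rightarrow> vname set" where
  "fv (Var x) = {x}"
| "fv (Lit n) = {}"
| "fv (Pair e1 e2) = fv e1 \<union> fv e2"
| "fv (Proj1 e) = fv e"
| "fv (Proj2 e) = fv e"
| "fv (Lam x t e) = fv e - {x}"
| "fv (App e1 e2) = fv e1 \<union> fv e2"
| "fv (Op f e1 e2) = fv e1 \<union> fv e2"

lemma typing_fv: "typing D G e t \<Longrightarrow> fv e \<subseteq> dom G"
  by (induction rule: typing.induct) (auto simp del: fun_upd_apply)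

lemma fv_closed_typing: "typing D Map.empty e t \<Longrightarrow> fv e = {}"
  using typing_fv by fastforce

lemma msubst_unused: "\<forall>x\<in>fv e. \<gamma> x = None \<Longrightarrow> msubst \<gamma> e = e"
  by (induction e arbitrary: \<gamma>) auto

lemma msubst_empty [simp]: "msubst Map.empty e = e"
  by (simp add: msubst_unused)

lemma msubst_msubst:
  "\<forall>x v. \<gamma> x = Some v \<longrightarrow> fv v = {} \<Longrightarrow> msubst \<gamma>' (msubst \<gamma> e) = msubst (\<gamma>' ++ \<gamma>) e"
proof (induction e arbitrary: \<gamma> \<gamma>')
  case (Var x)
  then show ?case by (auto split: option.splits simp: msubst_unused)
next
  case (Lam x t e)
  have "\<gamma>'(x := None) ++ \<gamma>(x := None) = (\<gamma>' ++ \<gamma>)(x := None)"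
    by (auto simp: fun_eq_iff map_add_def split: option.splits)
  moreover have "msubst (\<gamma>'(x := None)) (msubst (\<gamma>(x := None)) e) = msubst (\<gamma>'(x := None) ++ \<gamma>(x := None)) e"
    by (rule Lam.IH) (use Lam.prems in auto)
  ultimately show ?case by (simp only: msubst.simps)
qed auto

lemma subst_msubst_upd:
  assumes "\<forall>y v. \<gamma> y = Some v \<longrightarrow> fv v = {}"
  shows "subst x w (msubst (\<gamma>(x := None)) e) = msubst (\<gamma>(x \<mapsto> w)) e"
proof -
  have "[x \<mapsto> w] ++ \<gamma>(x := None) = \<gamma>(x \<mapsto> w)"
    by (auto simp: fun_eq_iff map_add_def split: option.splits)
  then show ?thesis
    unfolding subst_def using assms by (subst msubst_msubst) auto
qed

lemma typing_weaken: "typing D G e t \<Longrightarrow> G \<subseteq>\<^sub>m G' \<Longrightarrow> D \<subseteq> D' \<Longrightarrow> typing D' G' e t"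
proof (induction arbitrary: G' D' rule: typing.induct)
  case (t_var G x t D)
  then show ?case by (auto intro!: typing.t_var simp: map_le_def dom_def)
next
  case (t_lam D t1 G x e t2)
  then show ?case by (auto intro!: typing.t_lam map_le_upd simp: wf_ty_def simp del: fun_upd_apply)
qed (meson typing.intros)+

lemma typing_closed_weaken: "typing {} Map.empty e t \<Longrightarrow> typing D G e t"
  by (erule typing_weaken) auto

lemma typing_wf: "typing D G e t \<Longrightarrow> \<forall>x T. G x = Some T \<longrightarrow> wf_ty D T \<Longrightarrow> wf_ty D t"
  by (induction rule: typing.induct) (auto simp: wf_ty_def)

inductive_cases typing_elims:
  "typing D G (Lit n) t" "typing D G (Var x) t" "typing D G (Pair e1 e2) t"
  "typing D G (Proj1 e) t" "typing D G (Proj2 e) t" "typing D G (Lam x t1 e) t"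
  "typing D G (App e1 e2) t" "typing D G (Op f e1 e2) t"

lemma typing_unique: "typing D G e t \<Longrightarrow> typing D' G e t' \<Longrightarrow> t = t'"
proof (induction arbitrary: D' t' rule: typing.induct)
  case (t_pair D G e1 t1 e2 t2)
  from t_pair.prems show ?case by (rule typing_elims(3)) (metis t_pair.IH)
next
  case (t_proj1 D G e t1 t2)
  from t_proj1.prems show ?case by (rule typing_elims(4)) (auto dest: t_proj1.IH)
next
  case (t_proj2 D G e t1 t2)
  from t_proj2.prems show ?case by (rule typing_elims(5)) (auto dest: t_proj2.IH)
next
  case (t_lam D t1 G x e t2)
  from t_lam.prems show ?case by (rule typing_elims(6)) (metis t_lam.IH)
next
  case (t_app D G e1 t1 t2 e2)
  from t_app.prems show ?case by (rule typing_elims(7)) (auto dest: t_app.IH)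
qed (auto elim: typing_elims)

lemma typing_App_fun:
  assumes "typing D G (App v w) T2" and "typing D G w T1"
  shows "typing D G v (Fun T1 T2)"
  using assms(1) by (rule typing_elims(7)) (metis assms(2) typing_unique)

lemma tyvars_tsubst_ty: "\<forall>\<alpha>\<in>tyvars t. tyvars (\<delta> \<alpha>) = {} \<Longrightarrow> tyvars (tsubst_ty \<delta> t) = {}"
  by (induction t) auto

lemma tsubst_ty_TVar [simp]: "tsubst_ty TVar t = t"
  by (induction t) auto

lemma tsubst_TVar [simp]: "tsubst TVar e = e"
  by (induction e) auto

lemma tsubst_ty_closed: "tyvars t = {} \<Longrightarrow> tsubst_ty \<delta> t = t"
  by (induction t) auto

lemma typing_tsubst:
  "typing D G e t \<Longrightarrow> \<forall>\<alpha>\<in>D. tyvars (\<delta> \<alpha>) = {} \<Longrightarrow>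
   typing {} (map_option (tsubst_ty \<delta>) \<circ> G) (tsubst \<delta> e) (tsubst_ty \<delta> t)"
proof (induction rule: typing.induct)
  case (t_lam D t1 G x e t2)
  have "wf_ty {} (tsubst_ty \<delta> t1)"
    using t_lam tyvars_tsubst_ty[of t1 \<delta>] by (auto simp: wf_ty_def)
  moreover have "map_option (tsubst_ty \<delta>) \<circ> G(x \<mapsto> t1) = (map_option (tsubst_ty \<delta>) \<circ> G)(x \<mapsto> tsubst_ty \<delta> t1)"
    by auto
  ultimately show ?case
    using t_lam unfolding tsubst.simps tsubst_ty.simps by (metis typing.t_lam)
qed (auto intro: typing.intros)

lemma typing_msubst:
  "typing D G e t \<Longrightarrow> \<forall>x v T. \<gamma> x = Some v \<longrightarrow> G x = Some T \<longrightarrow> typing {} Map.empty v T \<Longrightarrow>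
   typing D (G |` (- dom \<gamma>)) (msubst \<gamma> e) t"
proof (induction arbitrary: \<gamma> rule: typing.induct)
  case (t_var G x t D)
  then show ?case
    by (cases "\<gamma> x") (auto intro: typing.t_var typing_closed_weaken simp: restrict_map_def)
next
  case (t_lam D t1 G x e t2)
  have "G(x \<mapsto> t1) |` (- dom (\<gamma>(x := None))) = (G |` (- dom \<gamma>))(x \<mapsto> t1)"
    by (auto simp: fun_eq_iff restrict_map_def)
  moreover have "typing D (G(x \<mapsto> t1) |` (- dom (\<gamma>(x := None)))) (msubst (\<gamma>(x := None)) e) t2"
    by (rule t_lam.IH) (use t_lam.prems in auto)
  ultimately show ?case
    unfolding msubst.simps by (metis t_lam.hyps(1) typing.t_lam)
qed (auto intro: typing.intros)

lemma typing_closed_instance: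
  assumes "typing D G e t" and "tsubst \<delta> e = e" and "\<forall>\<alpha>\<in>D. tyvars (\<delta> \<alpha>) = {}"
    and "\<forall>x v T. \<gamma> x = Some v \<longrightarrow> G x = Some T \<longrightarrow> typing {} Map.empty v (tsubst_ty \<delta> T)"
    and "dom G \<subseteq> dom \<gamma>"
  shows "typing {} Map.empty (msubst \<gamma> e) (tsubst_ty \<delta> t)"
proof -
  have "typing {} (map_option (tsubst_ty \<delta>) \<circ> G) e (tsubst_ty \<delta> t)"
    using typing_tsubst[OF assms(1,3)] assms(2) by simp
  then have "typing {} ((map_option (tsubst_ty \<delta>) \<circ> G) |` (- dom \<gamma>)) (msubst \<gamma> e) (tsubst_ty \<delta> t)"
    by (rule typing_msubst) (use assms(4) in auto)
  moreover have "(map_option (tsubst_ty \<delta>) \<circ> G) |` (- dom \<gamma>) = Map.empty"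
    using assms(5) by (auto simp: fun_eq_iff restrict_map_def dom_def)
  ultimately show ?thesis by simp
qed

lemma steps_cong:
  assumes "\<And>e e'. step e e' \<Longrightarrow> step (C e) (C e')" and "steps e e'"
  shows "steps (C e) (C e')"
  using assms(2) by induction (auto intro: rtranclp.rtrancl_into_rtrancl assms(1))

lemma steps_Pair:
  assumes "steps e1 v1" and "is_val v1" and "steps e2 v2"
  shows "steps (Pair e1 e2) (Pair v1 v2)"
proof -
  have "steps (Pair e1 e2) (Pair v1 e2)"
    using steps_cong[of "\<lambda>e. Pair e e2"] assms(1) step.pair1 by blast
  also have "steps (Pair v1 e2) (Pair v1 v2)"
    using steps_cong[of "Pair v1"] assms(3) step.pair2[OF assms(2)] by blast
  finally show ?thesis .
qed

lemma steps_App: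
  assumes "steps e1 v1" and "is_val v1" and "steps e2 v2"
  shows "steps (App e1 e2) (App v1 v2)"
proof -
  have "steps (App e1 e2) (App v1 e2)"
    using steps_cong[of "\<lambda>e. App e e2"] assms(1) step.app1 by blast
  also have "steps (App v1 e2) (App v1 v2)"
    using steps_cong[of "App v1"] assms(3) step.app2[OF assms(2)] by blast
  finally show ?thesis .
qed

lemma steps_Op:
  assumes "steps e1 (Lit n1)" and "steps e2 (Lit n2)"
  shows "steps (Op f e1 e2) (Lit (f n1 n2))"
proof -
  have "steps (Op f e1 e2) (Op f (Lit n1) e2)"
    using steps_cong[of "\<lambda>e. Op f e e2"] assms(1) step.op1 by blast
  also have "steps (Op f (Lit n1) e2) (Op f (Lit n1) (Lit n2))"
    using steps_cong[of "Op f (Lit n1)"] assms(2) step.op2[of "Lit n1"] by simp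
  also have "step (Op f (Lit n1) (Lit n2)) (Lit (f n1 n2))"
    by (rule step.op)
  finally show ?thesis .
qed

lemma steps_Proj1:
  assumes "steps e (Pair v1 v2)" and "is_val v1" and "is_val v2"
  shows "steps (Proj1 e) v1"
proof -
  have "steps (Proj1 e) (Proj1 (Pair v1 v2))"
    using steps_cong[of Proj1] assms(1) step.proj1c by blast
  also have "step (Proj1 (Pair v1 v2)) v1"
    using assms(2,3) by (rule step.proj1)
  finally show ?thesis .
qed

lemma steps_Proj2:
  assumes "steps e (Pair v1 v2)" and "is_val v1" and "is_val v2"
  shows "steps (Proj2 e) v2"
proof -
  have "steps (Proj2 e) (Proj2 (Pair v1 v2))"
    using steps_cong[of Proj2] assms(1) step.proj2c by blast
  also have "step (Proj2 (Pair v1 v2)) v2"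
    using assms(2,3) by (rule step.proj2)
  finally show ?thesis .
qed

abbreviation closed_value :: "term \<Rightarrow> ty \<Rightarrow> bool" where
  "closed_value v T \<equiv> is_val v \<and> typing {} Map.empty v T"

abbreviation indist_ev ::
    "(tyvar \<Rightarrow> term \<Rightarrow> term \<Rightarrow> bool) \<Rightarrow> (tyvar \<Rightarrow> ty) \<Rightarrow> ty \<Rightarrow> term \<Rightarrow> term \<Rightarrow> bool" where
  "indist_ev \<sigma> \<delta> t \<equiv> ev_rel \<delta> t (indist \<sigma> \<delta> t)"

lemma ev_relI:
  assumes "typing {} Map.empty e1 (tsubst_ty \<delta> t)" and "typing {} Map.empty e2 (tsubst_ty \<delta> t)"
    and "steps e1 v" and "is_val v" and "steps e2 v'" and "is_val v'" and "R v v'"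
  shows "ev_rel \<delta> t R e1 e2"
  using assms unfolding ev_rel_def by blast

lemma ev_relE:
  assumes "ev_rel \<delta> t R e1 e2"
  obtains v v' where "typing {} Map.empty e1 (tsubst_ty \<delta> t)"
    and "typing {} Map.empty e2 (tsubst_ty \<delta> t)"
    and "steps e1 v" and "is_val v" and "steps e2 v'" and "is_val v'" and "R v v'"
  using assms unfolding ev_rel_def by blast

definition admissible_interp ::
    "tyvar set \<Rightarrow> (tyvar \<Rightarrow> term \<Rightarrow> term \<Rightarrow> bool) \<Rightarrow> (tyvar \<Rightarrow> ty) \<Rightarrow> bool" where
  "admissible_interp D \<sigma> \<delta> \<longleftrightarrow> (\<forall>\<alpha>\<in>D. tyvars (\<delta> \<alpha>) = {} \<and> (\<exists>v1 v2. \<sigma> \<alpha> v1 v2) \<and>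
     (\<forall>v1 v2. \<sigma> \<alpha> v1 v2 \<longrightarrow> closed_value v1 (\<delta> \<alpha>) \<and> closed_value v2 (\<delta> \<alpha>)))"

lemma admissible_interp_closed_type:
  "admissible_interp D \<sigma> \<delta> \<Longrightarrow> wf_ty D t \<Longrightarrow> wf_ty {} (tsubst_ty \<delta> t)"
  unfolding wf_ty_def by (subst tyvars_tsubst_ty) (auto simp: admissible_interp_def)

lemma indist_closed_type_indep:
  "tyvars t = {} \<Longrightarrow> indist \<sigma> \<delta> t = indist \<sigma>' \<delta>' t \<and> tsubst_ty \<delta> t = tsubst_ty \<delta>' t"
  by (induction t) (auto simp: ev_rel_def fun_eq_iff)

lemma typing_const_fun:
  assumes "typing {} Map.empty u T2" and "wf_ty {} T1"
  shows "typing {} Map.empty (Lam x T1 u) (Fun T1 T2)"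
  using assms by (auto intro: typing.t_lam typing_closed_weaken)

lemma step_const_fun:
  assumes "is_val w" and "typing {} Map.empty u T"
  shows "step (App (Lam x T1 u) w) u"
proof -
  have "subst x w u = u"
    unfolding subst_def using fv_closed_typing[OF assms(2)] by (simp add: msubst_unused)
  then show ?thesis using step.beta[OF assms(1), of x T1 u] by simp
qed

lemma indist_ev_const_fun:
  assumes "indist \<sigma> \<delta> t u1 u2" and "closed_value u1 (tsubst_ty \<delta> t) \<and> closed_value u2 (tsubst_ty \<delta> t)"
    and "closed_value w1 T \<and> closed_value w2 T" and "wf_ty {} T"
  shows "indist_ev \<sigma> \<delta> t (App (Lam x T u1) w1) (App (Lam x T u2) w2)"
  using assms
  by (intro ev_relI[where v = u1 and v' = u2] typing.t_app[OF typing_const_fun[OF _ assms(4)]]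
      r_into_rtranclp step_const_fun[where T = "tsubst_ty \<delta> t"]) simp_all

lemma indist_inhabited_closed_values:
  assumes "admissible_interp D \<sigma> \<delta>" and "wf_ty D t"
  shows "(\<exists>v1 v2. indist \<sigma> \<delta> t v1 v2) \<and>
    (\<forall>v1 v2. indist \<sigma> \<delta> t v1 v2 \<longrightarrow>
       closed_value v1 (tsubst_ty \<delta> t) \<and> closed_value v2 (tsubst_ty \<delta> t))"
  using assms(2)
proof (induction t)
  case TInt
  then show ?case by (auto intro: typing.t_lit)
next
  case (TVar \<alpha>)
  then show ?case using assms(1) by (auto simp: admissible_interp_def wf_ty_def)
next
  case (Prod t1 t2)
  then show ?case by (fastforce simp: wf_ty_def intro: typing.t_pair)
next
  case (Fun t1 t2)
  let ?T1 = "tsubst_ty \<delta> t1" and ?T2 = "tsubst_ty \<delta> t2"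
  have wf1: "wf_ty D t1" and wf2: "wf_ty D t2"
    using Fun.prems by (auto simp: wf_ty_def)
  obtain w1 w2 where w: "indist \<sigma> \<delta> t1 w1 w2"
    and ty1: "\<And>v1 v2. indist \<sigma> \<delta> t1 v1 v2 \<Longrightarrow> closed_value v1 ?T1 \<and> closed_value v2 ?T1"
    using Fun.IH(1)[OF wf1] by blast
  obtain u1 u2 where u: "indist \<sigma> \<delta> t2 u1 u2" and ty2: "closed_value u1 ?T2 \<and> closed_value u2 ?T2"
    using Fun.IH(2)[OF wf2] by blast
  have "indist \<sigma> \<delta> (Fun t1 t2) (Lam ''x'' ?T1 u1) (Lam ''x'' ?T1 u2)"
    using indist_ev_const_fun[OF u ty2 ty1 admissible_interp_closed_type[OF assms(1) wf1]] by simp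
  moreover have "closed_value v1 (Fun ?T1 ?T2) \<and> closed_value v2 (Fun ?T1 ?T2)"
    if "indist \<sigma> \<delta> (Fun t1 t2) v1 v2" for v1 v2
  proof -
    have "indist_ev \<sigma> \<delta> t2 (App v1 w1) (App v2 w2)" and "is_val v1" "is_val v2"
      using that w by auto
    then show ?thesis
      unfolding ev_rel_def using ty1[OF w] typing_App_fun by blast
  qed
  ultimately show ?case
    unfolding tsubst_ty.simps by blast
qed

lemma indist_closed_values:
  "admissible_interp D \<sigma> \<delta> \<Longrightarrow> wf_ty D t \<Longrightarrow> indist \<sigma> \<delta> t v1 v2 \<Longrightarrow>
   closed_value v1 (tsubst_ty \<delta> t) \<and> closed_value v2 (tsubst_ty \<delta> t)"
  using conjunct2[OF indist_inhabited_closed_values] by blast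

lemma indist_ev_Pair:
  assumes "indist_ev \<sigma> \<delta> t1 e1 e1'" and "indist_ev \<sigma> \<delta> t2 e2 e2'"
  shows "indist_ev \<sigma> \<delta> (Prod t1 t2) (Pair e1 e2) (Pair e1' e2')"
proof -
  obtain v1 v1' where "typing {} Map.empty e1 (tsubst_ty \<delta> t1)" "typing {} Map.empty e1' (tsubst_ty \<delta> t1)"
    "steps e1 v1" "is_val v1" "steps e1' v1'" "is_val v1'" "indist \<sigma> \<delta> t1 v1 v1'"
    using assms(1) by (rule ev_relE)
  moreover obtain w2 w2' where "typing {} Map.empty e2 (tsubst_ty \<delta> t2)" "typing {} Map.empty e2' (tsubst_ty \<delta> t2)"
    "steps e2 w2" "is_val w2" "steps e2' w2'" "is_val w2'" "indist \<sigma> \<delta> t2 w2 w2'"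
    using assms(2) by (rule ev_relE)
  ultimately show ?thesis
    by (intro ev_relI[where v = "Pair v1 w2" and v' = "Pair v1' w2'"]) (auto intro: typing.t_pair steps_Pair)
qed

lemma indist_ev_Proj1:
  assumes "indist_ev \<sigma> \<delta> (Prod t1 t2) e e'"
  shows "indist_ev \<sigma> \<delta> t1 (Proj1 e) (Proj1 e')"
proof -
  obtain p p' where ty: "typing {} Map.empty e (Prod (tsubst_ty \<delta> t1) (tsubst_ty \<delta> t2))"
    "typing {} Map.empty e' (Prod (tsubst_ty \<delta> t1) (tsubst_ty \<delta> t2))"
    and ev: "steps e p" "is_val p" "steps e' p'" "is_val p'" "indist \<sigma> \<delta> (Prod t1 t2) p p'"
    using assms by (auto elim: ev_relE)
  then obtain v w v' w' where "p = Pair v w" "p' = Pair v' w'" "indist \<sigma> \<delta> t1 v v'" by auto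
  with ty ev show ?thesis
    by (intro ev_relI[where v = v and v' = v']) (auto intro: typing.t_proj1 steps_Proj1)
qed

lemma indist_ev_Proj2:
  assumes "indist_ev \<sigma> \<delta> (Prod t1 t2) e e'"
  shows "indist_ev \<sigma> \<delta> t2 (Proj2 e) (Proj2 e')"
proof -
  obtain p p' where ty: "typing {} Map.empty e (Prod (tsubst_ty \<delta> t1) (tsubst_ty \<delta> t2))"
    "typing {} Map.empty e' (Prod (tsubst_ty \<delta> t1) (tsubst_ty \<delta> t2))"
    and ev: "steps e p" "is_val p" "steps e' p'" "is_val p'" "indist \<sigma> \<delta> (Prod t1 t2) p p'"
    using assms by (auto elim: ev_relE)
  then obtain v w v' w' where "p = Pair v w" "p' = Pair v' w'" "indist \<sigma> \<delta> t2 w w'" by auto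
  with ty ev show ?thesis
    by (intro ev_relI[where v = w and v' = w']) (auto intro: typing.t_proj2 steps_Proj2)
qed

lemma indist_ev_App:
  assumes "indist_ev \<sigma> \<delta> (Fun t1 t2) e1 e1'" and "indist_ev \<sigma> \<delta> t1 e2 e2'"
  shows "indist_ev \<sigma> \<delta> t2 (App e1 e2) (App e1' e2')"
proof -
  obtain f f' where ty1: "typing {} Map.empty e1 (Fun (tsubst_ty \<delta> t1) (tsubst_ty \<delta> t2))"
    "typing {} Map.empty e1' (Fun (tsubst_ty \<delta> t1) (tsubst_ty \<delta> t2))"
    and ev1: "steps e1 f" "is_val f" "steps e1' f'" "is_val f'" "indist \<sigma> \<delta> (Fun t1 t2) f f'"
    using assms(1) by (auto elim: ev_relE)
  obtain w w' where ty2: "typing {} Map.empty e2 (tsubst_ty \<delta> t1)" "typing {} Map.empty e2' (tsubst_ty \<delta> t1)"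
    and ev2: "steps e2 w" "steps e2' w'" "indist \<sigma> \<delta> t1 w w'"
    using assms(2) by (auto elim: ev_relE)
  have "indist_ev \<sigma> \<delta> t2 (App f w) (App f' w')"
    using ev1(5) ev2(3) by simp
  then obtain r r' where r: "steps (App f w) r" "is_val r" "steps (App f' w') r'" "is_val r'"
      "indist \<sigma> \<delta> t2 r r'"
    by (auto elim: ev_relE)
  have "steps (App e1 e2) r"
    using steps_App[OF ev1(1,2) ev2(1)] r(1) by (rule rtranclp_trans)
  moreover have "steps (App e1' e2') r'"
    using steps_App[OF ev1(3,4) ev2(2)] r(3) by (rule rtranclp_trans)
  ultimately show ?thesis
    using ty1 ty2 r by (intro ev_relI[where v = r and v' = r']) (auto intro: typing.t_app)
qed

lemma indist_ev_Op:
  assumes "indist_ev \<sigma> \<delta> TInt e1 e1'" and "indist_ev \<sigma> \<delta> TInt e2 e2'"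
  shows "indist_ev \<sigma> \<delta> TInt (Op f e1 e2) (Op f e1' e2')"
proof -
  obtain n1 n2 where "typing {} Map.empty e1 TInt" "typing {} Map.empty e1' TInt"
    "steps e1 (Lit n1)" "steps e1' (Lit n1)"
    "typing {} Map.empty e2 TInt" "typing {} Map.empty e2' TInt"
    "steps e2 (Lit n2)" "steps e2' (Lit n2)"
    using assms by (auto elim!: ev_relE)
  then show ?thesis
    by (intro ev_relI[where v = "Lit (f n1 n2)" and v' = "Lit (f n1 n2)"])
      (auto intro: typing.t_op steps_Op)
qed

lemma ev_rel_converse_step:
  assumes "ev_rel \<delta> t R e1' e2'" and "step e1 e1'" and "step e2 e2'"
    and "typing {} Map.empty e1 (tsubst_ty \<delta> t)" and "typing {} Map.empty e2 (tsubst_ty \<delta> t)"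
  shows "ev_rel \<delta> t R e1 e2"
  using assms unfolding ev_rel_def by (meson converse_rtranclp_into_rtranclp)

definition related_substs :: "(tyvar \<Rightarrow> term \<Rightarrow> term \<Rightarrow> bool) \<Rightarrow> (tyvar \<Rightarrow> ty) \<Rightarrow> (vname \<rightharpoonup> ty)
    \<Rightarrow> (vname \<rightharpoonup> term) \<Rightarrow> (vname \<rightharpoonup> term) \<Rightarrow> bool" where
  "related_substs \<sigma> \<delta> G \<gamma>1 \<gamma>2 \<longleftrightarrow> dom \<gamma>1 = dom G \<and> dom \<gamma>2 = dom G \<and>
     (\<forall>x T. G x = Some T \<longrightarrow> indist \<sigma> \<delta> T (the (\<gamma>1 x)) (the (\<gamma>2 x)))"

lemma related_substs_upd:
  "related_substs \<sigma> \<delta> G \<gamma>1 \<gamma>2 \<Longrightarrow> indist \<sigma> \<delta> T w1 w2 \<Longrightarrow>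
   related_substs \<sigma> \<delta> (G(x \<mapsto> T)) (\<gamma>1(x \<mapsto> w1)) (\<gamma>2(x \<mapsto> w2))"
  by (auto simp: related_substs_def)

lemma related_substs_closed_values:
  assumes "admissible_interp D \<sigma> \<delta>" and "\<forall>x T. G x = Some T \<longrightarrow> wf_ty D T"
    and "related_substs \<sigma> \<delta> G \<gamma>1 \<gamma>2" and "\<gamma>1 x = Some v \<or> \<gamma>2 x = Some v"
  obtains T where "G x = Some T" and "closed_value v (tsubst_ty \<delta> T)"
proof -
  from assms(3,4) obtain T where T: "G x = Some T"
    unfolding related_substs_def by (metis domD domI)
  moreover have "indist \<sigma> \<delta> T (the (\<gamma>1 x)) (the (\<gamma>2 x))" and "wf_ty D T"
    using T assms(2,3) unfolding related_substs_def by auto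
  ultimately have "closed_value (the (\<gamma>1 x)) (tsubst_ty \<delta> T) \<and> closed_value (the (\<gamma>2 x)) (tsubst_ty \<delta> T)"
    using indist_closed_values[OF assms(1)] by blast
  with T assms(4) that show thesis by auto
qed

lemma related_substs_closed_instance:
  assumes "typing D G e t" and "tsubst \<delta> e = e" and "admissible_interp D \<sigma> \<delta>"
    and "\<forall>x T. G x = Some T \<longrightarrow> wf_ty D T" and "related_substs \<sigma> \<delta> G \<gamma>1 \<gamma>2"
    and "\<gamma> = \<gamma>1 \<or> \<gamma> = \<gamma>2"
  shows "typing {} Map.empty (msubst \<gamma> e) (tsubst_ty \<delta> t)"
proof (rule typing_closed_instance[OF assms(1,2)])
  show "\<forall>\<alpha>\<in>D. tyvars (\<delta> \<alpha>) = {}"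
    using assms(3) by (simp add: admissible_interp_def)
  show "\<forall>y v T. \<gamma> y = Some v \<longrightarrow> G y = Some T \<longrightarrow> typing {} Map.empty v (tsubst_ty \<delta> T)"
  proof (intro allI impI)
    fix y v T assume "\<gamma> y = Some v" and T: "G y = Some T"
    then have "\<gamma>1 y = Some v \<or> \<gamma>2 y = Some v"
      using assms(6) by auto
    then obtain T' where "G y = Some T'" and "closed_value v (tsubst_ty \<delta> T')"
      by (rule related_substs_closed_values[OF assms(3-5)])
    with T show "typing {} Map.empty v (tsubst_ty \<delta> T)"
      by simp
  qed
  show "dom G \<subseteq> dom \<gamma>"
    using assms(5,6) by (auto simp: related_substs_def)
qed

lemma related_substs_fv:
  assumes "admissible_interp D \<sigma> \<delta>" and "\<forall>x T. G x = Some T \<longrightarrow> wf_ty D T"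
    and "related_substs \<sigma> \<delta> G \<gamma>1 \<gamma>2" and "\<gamma> = \<gamma>1 \<or> \<gamma> = \<gamma>2"
  shows "\<forall>y v. \<gamma> y = Some v \<longrightarrow> fv v = {}"
proof (intro allI impI)
  fix y v assume "\<gamma> y = Some v"
  then have "\<gamma>1 y = Some v \<or> \<gamma>2 y = Some v"
    using assms(4) by auto
  then obtain T where "closed_value v (tsubst_ty \<delta> T)"
    by (rule related_substs_closed_values[OF assms(1-3)])
  then show "fv v = {}"
    using fv_closed_typing by blast
qed

lemma step_msubst_Lam:
  assumes "\<forall>y v. \<gamma> y = Some v \<longrightarrow> fv v = {}" and "is_val w"
  shows "step (App (msubst \<gamma> (Lam x T b)) w) (msubst (\<gamma>(x \<mapsto> w)) b)"
  using step.beta[OF assms(2), of x T "msubst (\<gamma>(x := None)) b"] assms(1)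
  by (simp add: subst_msubst_upd)

lemma indist_ev_Lam:
  assumes "admissible_interp D \<sigma> \<delta>" and "wf_ty D t1" and "tsubst_ty \<delta> t1 = t1"
    and "\<forall>y v. \<gamma>1 y = Some v \<longrightarrow> fv v = {}" and "\<forall>y v. \<gamma>2 y = Some v \<longrightarrow> fv v = {}"
    and typed1: "typing {} Map.empty (msubst \<gamma>1 (Lam x t1 b)) (Fun t1 (tsubst_ty \<delta> t2))"
    and typed2: "typing {} Map.empty (msubst \<gamma>2 (Lam x t1 b)) (Fun t1 (tsubst_ty \<delta> t2))"
    and body: "\<And>w1 w2. indist \<sigma> \<delta> t1 w1 w2 \<Longrightarrow>
      indist_ev \<sigma> \<delta> t2 (msubst (\<gamma>1(x \<mapsto> w1)) b) (msubst (\<gamma>2(x \<mapsto> w2)) b)"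
  shows "indist_ev \<sigma> \<delta> (Fun t1 t2) (msubst \<gamma>1 (Lam x t1 b)) (msubst \<gamma>2 (Lam x t1 b))"
proof -
  have "indist_ev \<sigma> \<delta> t2 (App (msubst \<gamma>1 (Lam x t1 b)) w1) (App (msubst \<gamma>2 (Lam x t1 b)) w2)"
    if w: "indist \<sigma> \<delta> t1 w1 w2" for w1 w2
  proof -
    have w1: "closed_value w1 t1" and w2: "closed_value w2 t1"
      using indist_closed_values[OF assms(1,2) w] assms(3) by auto
    show ?thesis
    proof (rule ev_rel_converse_step[OF body[OF w]])
      show "step (App (msubst \<gamma>1 (Lam x t1 b)) w1) (msubst (\<gamma>1(x \<mapsto> w1)) b)"
        and "step (App (msubst \<gamma>2 (Lam x t1 b)) w2) (msubst (\<gamma>2(x \<mapsto> w2)) b)"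
        using step_msubst_Lam assms(4,5) w1 w2 by blast+
      show "typing {} Map.empty (App (msubst \<gamma>1 (Lam x t1 b)) w1) (tsubst_ty \<delta> t2)"
        and "typing {} Map.empty (App (msubst \<gamma>2 (Lam x t1 b)) w2) (tsubst_ty \<delta> t2)"
        using typing.t_app[OF typed1 w1[THEN conjunct2]] typing.t_app[OF typed2 w2[THEN conjunct2]] .
    qed
  qed
  then show ?thesis
    using typed1 typed2 assms(3)
    by (intro ev_relI[where v = "msubst \<gamma>1 (Lam x t1 b)" and v' = "msubst \<gamma>2 (Lam x t1 b)"]) simp_all
qed

theorem fundamental_lemma:
  assumes "typing D G e t" and "tsubst \<delta> e = e" and "admissible_interp D \<sigma> \<delta>"
    and "\<forall>x T. G x = Some T \<longrightarrow> wf_ty D T" and "related_substs \<sigma> \<delta> G \<gamma>1 \<gamma>2"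
  shows "indist_ev \<sigma> \<delta> t (msubst \<gamma>1 e) (msubst \<gamma>2 e)"
  using assms
proof (induction arbitrary: \<gamma>1 \<gamma>2 rule: typing.induct)
  case (t_lit D G n)
  show ?case by (auto simp: ev_rel_def intro: typing.t_lit)
next
  case (t_var G x t D)
  then obtain v1 v2 where v: "\<gamma>1 x = Some v1" "\<gamma>2 x = Some v2"
    unfolding related_substs_def by (metis domD domI)
  have "indist \<sigma> \<delta> t (the (\<gamma>1 x)) (the (\<gamma>2 x))"
    using t_var.hyps t_var.prems(4) unfolding related_substs_def by blast
  then have rel: "indist \<sigma> \<delta> t v1 v2"
    using v by simp
  have "wf_ty D t"
    using t_var.hyps t_var.prems(3) by blast
  then have "closed_value v1 (tsubst_ty \<delta> t) \<and> closed_value v2 (tsubst_ty \<delta> t)"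
    using indist_closed_values[OF t_var.prems(2) _ rel] by blast
  then show ?case
    using v rel by (intro ev_relI[where v = v1 and v' = v2]) simp_all
next
  case (t_pair D G e1 t1 e2 t2)
  show ?case
    unfolding msubst.simps by (rule indist_ev_Pair[OF t_pair.IH(1) t_pair.IH(2)]) (use t_pair.prems in auto)
next
  case (t_proj1 D G e t1 t2)
  show ?case
    unfolding msubst.simps by (rule indist_ev_Proj1[OF t_proj1.IH]) (use t_proj1.prems in auto)
next
  case (t_proj2 D G e t1 t2)
  show ?case
    unfolding msubst.simps by (rule indist_ev_Proj2[OF t_proj2.IH]) (use t_proj2.prems in auto)
next
  case (t_app D G e1 t1 t2 e2)
  show ?case
    unfolding msubst.simps by (rule indist_ev_App[OF t_app.IH(1) t_app.IH(2)]) (use t_app.prems in auto)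
next
  case (t_op D G e1 e2 f)
  show ?case
    unfolding msubst.simps by (rule indist_ev_Op[OF t_op.IH(1) t_op.IH(2)]) (use t_op.prems in auto)
next
  case (t_lam D t1 G x b t2)
  have ann: "tsubst_ty \<delta> t1 = t1" and "tsubst \<delta> b = b"
    using t_lam.prems(1) by auto
  have typed: "typing {} Map.empty (msubst \<gamma> (Lam x t1 b)) (Fun t1 (tsubst_ty \<delta> t2))"
    if "\<gamma> = \<gamma>1 \<or> \<gamma> = \<gamma>2" for \<gamma>
    using related_substs_closed_instance[OF typing.t_lam[OF t_lam.hyps] t_lam.prems that] ann by simp
  have body: "indist_ev \<sigma> \<delta> t2 (msubst (\<gamma>1(x \<mapsto> w1)) b) (msubst (\<gamma>2(x \<mapsto> w2)) b)"
    if w: "indist \<sigma> \<delta> t1 w1 w2" for w1 w2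
  proof (rule t_lam.IH)
    show "\<forall>y T. (G(x \<mapsto> t1)) y = Some T \<longrightarrow> wf_ty D T"
      using t_lam.prems(3) t_lam.hyps(1) by auto
    show "related_substs \<sigma> \<delta> (G(x \<mapsto> t1)) (\<gamma>1(x \<mapsto> w1)) (\<gamma>2(x \<mapsto> w2))"
      using t_lam.prems(4) w by (rule related_substs_upd)
  qed fact+
  show ?case
    using t_lam.prems(2) t_lam.hyps(1) ann
      related_substs_fv[OF t_lam.prems(2-4) disjI1[OF refl]]
      related_substs_fv[OF t_lam.prems(2-4) disjI2[OF refl]]
      typed[OF disjI1[OF refl]] typed[OF disjI2[OF refl]] body
    by (rule indist_ev_Lam)
qed

corollary indist_closed_refl: "typing {} Map.empty e t \<Longrightarrow> ev_rel TVar t (indist_closed t) e e"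
  using fundamental_lemma[of "{}" Map.empty e t TVar "\<lambda>_ _ _. False" Map.empty Map.empty]
  by (simp add: admissible_interp_def related_substs_def indist_closed_def)

lemma ev_rel_closed_type:
  "tyvars t = {} \<Longrightarrow> ev_rel TVar t (indist_closed t) = indist_ev \<sigma> \<delta> t"
  using indist_closed_type_indep[of t "\<lambda>_ _ _. False" TVar \<sigma> \<delta>]
  by (simp add: indist_closed_def ev_rel_def fun_eq_iff)

lemma wf_policy_SomeD:
  assumes "wf_policy V F" and "F x = Some (f, tf)"
  shows "\<exists>y b. f = Lam y TInt b" and "typing {} Map.empty f (Fun TInt tf)" and "tyvars tf = {}"
  using assms unfolding wf_policy_def by blast+

lemma Gamma_P_SomeE:
  assumes "Gamma_P V F a xf z = Some T"
  obtains "z \<in> V" and "T = TVar (a z)"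
  | x f tf where "z \<notin> V" and "F x = Some (f, tf)" and "xf x = z" and "T = Fun (TVar (a x)) tf"
proof (cases "z \<in> V")
  case True
  then show thesis using assms that(1) by (simp add: Gamma_P_def)
next
  case False
  then have ex: "\<exists>x\<in>dom F. xf x = z"
    using assms by (simp add: Gamma_P_def split: if_splits)
  define x where "x = (SOME x. x \<in> dom F \<and> xf x = z)"
  have "x \<in> dom F \<and> xf x = z"
    unfolding x_def by (rule someI_ex) (use ex in blast)
  moreover from this obtain f tf where "F x = Some (f, tf)"
    by auto
  moreover have "T = Fun (TVar (a x)) (snd (the (F x)))"
    using assms False ex by (simp add: Gamma_P_def x_def Let_def)
  ultimately show thesis using False that(2) by simp
qed

lemma Gamma_P_wf:
  assumes "wf_policy V F" and "Gamma_P V F a xf z = Some T"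
  shows "wf_ty (Delta_P V a) T"
  using assms(2)
proof (cases rule: Gamma_P_SomeE)
  case (2 x f tf)
  moreover have "x \<in> V"
    using assms(1) \<open>F x = Some (f, tf)\<close> by (auto simp: wf_policy_def)
  ultimately show ?thesis
    using wf_policy_SomeD(3)[OF assms(1)] by (auto simp: wf_ty_def Delta_P_def)
qed (simp add: wf_ty_def Delta_P_def)

lemma Gamma_C_eq_delta_P_Gamma_P:
  assumes "wf_policy V F"
  shows "Gamma_C V F xf = map_option (tsubst_ty (delta_P V a)) \<circ> Gamma_P V F a xf"
proof
  fix z
  show "Gamma_C V F xf z = (map_option (tsubst_ty (delta_P V a)) \<circ> Gamma_P V F a xf) z"
  proof (cases "z \<notin> V \<and> (\<exists>x\<in>dom F. xf x = z)")
    case True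
    define x where "x = (SOME x. x \<in> dom F \<and> xf x = z)"
    have "x \<in> dom F"
      unfolding x_def by (rule someI2_ex) (use True in auto)
    then obtain f tf where F: "F x = Some (f, tf)" and "x \<in> V"
      using assms by (auto simp: wf_policy_def)
    then show ?thesis
      using True wf_policy_SomeD(3)[OF assms F]
      by (simp add: Gamma_C_def Gamma_P_def delta_P_def tsubst_ty_closed flip: x_def)
  qed (auto simp: Gamma_C_def Gamma_P_def delta_P_def)
qed

lemma admissible_interp_sigma_P:
  assumes "wf_policy V F"
  shows "admissible_interp (Delta_P V a) (sigma_P V F a) (delta_P V a)"
proof -
  have "sigma_P V F a \<alpha> (Lit 0) (Lit 0)" for \<alpha>
    unfolding sigma_P_def
  proof (intro conjI ballI impI)
    fix x assume "x \<in> dom F"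
    then obtain f tf where F: "F x = Some (f, tf)" by auto
    have "typing {} Map.empty (App f (Lit 0)) tf"
      using wf_policy_SomeD(2)[OF assms F] typing.t_lit by (rule typing.t_app)
    then show "case the (F x) of (f, tf) \<Rightarrow> ev_rel TVar tf (indist_closed tf) (App f (Lit 0)) (App f (Lit 0))"
      using F indist_closed_refl by simp
  qed (auto intro: typing.t_lit)
  then show ?thesis
    unfolding admissible_interp_def
  proof (intro ballI conjI)
    fix \<alpha> assume "\<alpha> \<in> Delta_P V a"
    then have "delta_P V a \<alpha> = TInt"
      by (simp add: Delta_P_def delta_P_def)
    then show "tyvars (delta_P V a \<alpha>) = {}"
      and "\<forall>v1 v2. sigma_P V F a \<alpha> v1 v2 \<longrightarrow>
        closed_value v1 (delta_P V a \<alpha>) \<and> closed_value v2 (delta_P V a \<alpha>)"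
      by (simp_all add: sigma_P_def)
  qed blast
qed

lemma I_subst_related_substs:
  assumes "wf_policy V F" and "I_subst V F a xf \<gamma>1 \<gamma>2"
  shows "related_substs (sigma_P V F a) (delta_P V a) (Gamma_P V F a xf) \<gamma>1 \<gamma>2"
  unfolding related_substs_def
proof (intro conjI allI impI)
  show "dom \<gamma>1 = dom (Gamma_P V F a xf)" and "dom \<gamma>2 = dom (Gamma_P V F a xf)"
    using assms(2) by (auto simp: I_subst_def respects_ctx_def)
next
  fix z T assume "Gamma_P V F a xf z = Some T"
  then show "indist (sigma_P V F a) (delta_P V a) T (the (\<gamma>1 z)) (the (\<gamma>2 z))"
  proof (cases rule: Gamma_P_SomeE)
    case 1
    then show ?thesis using assms(2) by (simp add: I_subst_def I_P_def)
  next
    case (2 x f tf)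
    have "\<gamma>1 z = Some f" "\<gamma>2 z = Some f"
      using assms(2) 2 by (force simp: I_subst_def)+
    moreover have "is_val f"
      using wf_policy_SomeD(1)[OF assms(1) \<open>F x = Some (f, tf)\<close>] by auto
    moreover have "indist_ev (sigma_P V F a) (delta_P V a) tf (App f w1) (App f w2)"
      if "sigma_P V F a (a x) w1 w2" for w1 w2
      using that 2 ev_rel_closed_type[OF wf_policy_SomeD(3)[OF assms(1) \<open>F x = Some (f, tf)\<close>]]
      unfolding sigma_P_def by fastforce
    ultimately show ?thesis using 2 by simp
  qed
qed

theorem theorem2:
  fixes V :: "vname set" and F :: "vname \<rightharpoonup> term \<times> ty"
    and a :: "vname \<Rightarrow> tyvar" and xf :: "vname \<Rightarrow> vname"
    and e :: "term" and \<tau> :: ty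
  assumes "wf_policy V F"
    and "naming_ok V F a xf"
    and "\<forall>\<delta>. tsubst \<delta> e = e"
    and "typing (Delta_P V a) (Gamma_P V F a xf) e \<tau>"
  shows "TRNI V F a xf e \<tau>"
proof -
  have closed_e: "tsubst (delta_P V a) e = e"
    using assms(3) by blast
  have adm: "admissible_interp (Delta_P V a) (sigma_P V F a) (delta_P V a)"
    using assms(1) by (rule admissible_interp_sigma_P)
  have wf_Gamma: "\<forall>z T. Gamma_P V F a xf z = Some T \<longrightarrow> wf_ty (Delta_P V a) T"
    using assms(1) Gamma_P_wf by blast
  have "typing {} (Gamma_C V F xf) e (tsubst_ty (delta_P V a) \<tau>)"
    using typing_tsubst[OF assms(4), of "delta_P V a"] adm closed_e
      Gamma_C_eq_delta_P_Gamma_P[OF assms(1), of xf a]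
    by (simp add: admissible_interp_def)
  moreover have "wf_ty (Delta_P V a) \<tau>"
    using assms(4) wf_Gamma by (rule typing_wf)
  moreover have "I_P_ev V F a \<tau> (msubst \<gamma>1 e) (msubst \<gamma>2 e)" if "I_subst V F a xf \<gamma>1 \<gamma>2" for \<gamma>1 \<gamma>2
    unfolding I_P_ev_def I_P_def
    using assms(4) closed_e adm wf_Gamma I_subst_related_substs[OF assms(1) that]
    by (rule fundamental_lemma)
  ultimately show ?thesis
    unfolding TRNI_def by blast
qed

end
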